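(* Let $G$ be a graph and let $L$ be a set of specified leaks on $V(G)$ with $I(L)=1$. Then a set $B\subseteq V(G)$ is an $L$-leaky forcing set of $G$ if and only if $B$ is a specified $1$-leaky forcing set of $G$.
   Context: All graphs are finite, simple and undirected. Zero forcing: a blue vertex $u$ with exactly one white neighbor $w$ may force $w$ (color it blue), written $u\to w$. A specified leak on $V(G)$ is an ordered pair $x\to y$ of vertices, meaning $x$ (the tail) is prohibited from forcing $y$ (the head). For a set $L$ of specified leaks, $T(L)$ and $H(L)$ denote its sets of tails and heads. $B$ is a specified $\ell$-leaky forcing set if for every set of at most $\ell$ specified leaks, exhaustively applying the forcing rule from initial blue set $B$ without performing prohibited forces colors all of $V(G)$ blue. Two sets $L_1,L_2$ of specified leaks on $V(G)$ are isomorphic if there is a bijection $\phi:V(G)\to V(G)$ with $x\to y\in L_1$ iff $\phi(x)\to\phi(y)\in L_2$. $B$ is an $L$-leaky forcing set if $B$ colors all of $G$ blue despite any set $L_1$ of specified leaks isomorphic to some subset $L_2\subseteq L$. A set $L$ of specified leaks is independent if $|T(L)|=|L|$ and $T(L)\cap H(L)=\varnothing$; $I(L)$ is the maximum size of an independent subset of $L$. *)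

theory Defs
  imports Main
begin

definition simple_graph :: "'a set \<Rightarrow> ('a \<Rightarrow> 'a \<Rightarrow> bool) \<Rightarrow> bool" where
  "simple_graph V E \<longleftrightarrow> finite V \<and> (\<forall>x y. E x y \<longrightarrow> E y x) \<and> (\<forall>x. \<not> E x x)
     \<and> (\<forall>x y. E x y \<longrightarrow> x \<in> V \<and> y \<in> V)"

text \<open>The final blue set obtained by exhaustively applying the forcing rule from B,
  never performing a prohibited force u \<rightarrow> w with (u,w) in the leak set L.\<close>
inductive_set leaky_closure :: "'a set \<Rightarrow> ('a \<Rightarrow> 'a \<Rightarrow> bool) \<Rightarrow> 'a set \<Rightarrow> ('a \<times> 'a) set \<Rightarrow> 'a set"
  for V E B L where
  init: "b \<in> B \<Longrightarrow> b \<in> leaky_closure V E B L"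
| force: "\<lbrakk> u \<in> leaky_closure V E B L; E u w; (u, w) \<notin> L;
            \<forall>x. E u x \<and> x \<noteq> w \<longrightarrow> x \<in> leaky_closure V E B L \<rbrakk>
          \<Longrightarrow> w \<in> leaky_closure V E B L"

definition forces_all :: "'a set \<Rightarrow> ('a \<Rightarrow> 'a \<Rightarrow> bool) \<Rightarrow> 'a set \<Rightarrow> ('a \<times> 'a) set \<Rightarrow> bool" where
  "forces_all V E B L \<longleftrightarrow> leaky_closure V E B L = V"

definition specified_leaky_forcing :: "'a set \<Rightarrow> ('a \<Rightarrow> 'a \<Rightarrow> bool) \<Rightarrow> nat \<Rightarrow> 'a set \<Rightarrow> bool" where
  "specified_leaky_forcing V E l B \<longleftrightarrow>
     (\<forall>L. L \<subseteq> V \<times> V \<and> card L \<le> l \<longrightarrow> forces_all V E B L)"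

definition tails :: "('a \<times> 'a) set \<Rightarrow> 'a set" where "tails L = fst ` L"
definition heads :: "('a \<times> 'a) set \<Rightarrow> 'a set" where "heads L = snd ` L"

definition leaks_iso :: "'a set \<Rightarrow> ('a \<times> 'a) set \<Rightarrow> ('a \<times> 'a) set \<Rightarrow> bool" where
  "leaks_iso V L1 L2 \<longleftrightarrow> (\<exists>\<phi>. bij_betw \<phi> V V \<and>
      (\<forall>x\<in>V. \<forall>y\<in>V. (x, y) \<in> L1 \<longleftrightarrow> (\<phi> x, \<phi> y) \<in> L2))"

definition L_leaky_forcing :: "'a set \<Rightarrow> ('a \<Rightarrow> 'a \<Rightarrow> bool) \<Rightarrow> ('a \<times> 'a) set \<Rightarrow> 'a set \<Rightarrow> bool" where
  "L_leaky_forcing V E L B \<longleftrightarrow>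
     (\<forall>L1. L1 \<subseteq> V \<times> V \<and> (\<exists>L2. L2 \<subseteq> L \<and> leaks_iso V L1 L2) \<longrightarrow> forces_all V E B L1)"

definition independent_leaks :: "('a \<times> 'a) set \<Rightarrow> bool" where
  "independent_leaks L \<longleftrightarrow> card (tails L) = card L \<and> tails L \<inter> heads L = {}"

definition indep_number :: "('a \<times> 'a) set \<Rightarrow> nat" where
  "indep_number L = Max (card ` {L'. L' \<subseteq> L \<and> independent_leaks L'})"

end

theory Submission
  imports Defs "HOL-Combinatorics.Transposition"
begin

text \<open>If B survives every single leak, a leak set L' can only stop the colouring at the leaks
  that block the last remaining force of their tail; these form an independent set, so when
  I(L') \<le> 1 there is at most one of them and B survives it. Both conditions of the theorem
  are invariant under isomorphism of leak sets, and a single leak is either a loop (which never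
  blocks anything) or isomorphic to the independent leak of L.\<close>

lemma leaky_closure_subset:
  assumes "simple_graph V E" "B \<subseteq> V"
  shows "leaky_closure V E B L \<subseteq> V"
proof
  fix z assume "z \<in> leaky_closure V E B L"
  then show "z \<in> V"
    by induction (use assms in \<open>auto simp: simple_graph_def\<close>)
qed

lemma finite_leaks:
  assumes "simple_graph V E" "L \<subseteq> V \<times> V"
  shows "finite L"
  using assms(1) by (intro finite_subset[OF assms(2)]) (simp add: simple_graph_def)

lemma leaky_closure_non_edge_leaks:
  assumes "\<forall>(u, w) \<in> L. \<not> E u w"
  shows "leaky_closure V E B {} \<subseteq> leaky_closure V E B L"
proof
  fix z assume "z \<in> leaky_closure V E B {}"
  then show "z \<in> leaky_closure V E B L"
  proof induction
    case (init b)
    then show ?case by (rule leaky_closure.init)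
  next
    case (force u w)
    then have "u \<in> leaky_closure V E B L" "E u w"
      by auto
    moreover have "(u, w) \<notin> L"
      using \<open>E u w\<close> assms by auto
    moreover have "\<forall>x. E u x \<and> x \<noteq> w \<longrightarrow> x \<in> leaky_closure V E B L"
      using force by auto
    ultimately show ?case
      by (rule leaky_closure.force)
  qed
qed

definition blocked_leaks :: "'a set \<Rightarrow> ('a \<Rightarrow> 'a \<Rightarrow> bool) \<Rightarrow> 'a set \<Rightarrow> ('a \<times> 'a) set \<Rightarrow> ('a \<times> 'a) set" where
  "blocked_leaks V E B L =
     (let C = leaky_closure V E B L in
      {(u, w) \<in> L. u \<in> C \<and> w \<notin> C \<and> E u w \<and> (\<forall>x. E u x \<and> x \<noteq> w \<longrightarrow> x \<in> C)})"

lemma blocked_leaks_subset: "blocked_leaks V E B L \<subseteq> L"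
  by (auto simp: blocked_leaks_def Let_def)

text \<open>A blocked leak is the only possible force of its tail, so tails are distinct; tails are
  blue and heads white in the final colouring.\<close>
lemma independent_blocked_leaks: "independent_leaks (blocked_leaks V E B L)"
proof -
  let ?P = "blocked_leaks V E B L"
  have "inj_on fst ?P"
    by (rule inj_onI) (auto simp: blocked_leaks_def Let_def)
  moreover have "fst ` ?P \<inter> snd ` ?P = {}"
    by (auto simp: blocked_leaks_def Let_def)
  ultimately show ?thesis
    by (simp add: independent_leaks_def tails_def heads_def card_image)
qed

lemma leaky_closure_blocked_leaks:
  "leaky_closure V E B (blocked_leaks V E B L) \<subseteq> leaky_closure V E B L"
proof
  fix z assume "z \<in> leaky_closure V E B (blocked_leaks V E B L)"
  then show "z \<in> leaky_closure V E B L"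
  proof induction
    case (init b)
    then show ?case by (rule leaky_closure.init)
  next
    case (force u w)
    then have blue: "u \<in> leaky_closure V E B L" and edge: "E u w"
      and others: "\<forall>x. E u x \<and> x \<noteq> w \<longrightarrow> x \<in> leaky_closure V E B L"
      and unblocked: "(u, w) \<notin> blocked_leaks V E B L"
      by auto
    show ?case
    proof (rule ccontr)
      assume "w \<notin> leaky_closure V E B L"
      with blue edge others unblocked have "(u, w) \<notin> L"
        by (simp add: blocked_leaks_def Let_def)
      with blue edge have "w \<in> leaky_closure V E B L"
        using others by (rule leaky_closure.force)
      with \<open>w \<notin> leaky_closure V E B L\<close> show False ..
    qed
  qed
qed

lemma forces_all_if_independent_subsets_le_1:
  assumes "simple_graph V E" "B \<subseteq> V" "specified_leaky_forcing V E 1 B"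
    and "L \<subseteq> V \<times> V"
    and indep: "\<forall>P \<subseteq> L. independent_leaks P \<longrightarrow> card P \<le> 1"
  shows "forces_all V E B L"
proof -
  let ?P = "blocked_leaks V E B L"
  have "?P \<subseteq> V \<times> V"
    using blocked_leaks_subset assms(4) by (rule subset_trans)
  moreover have "card ?P \<le> 1"
    using indep[rule_format, OF blocked_leaks_subset independent_blocked_leaks] .
  ultimately have "leaky_closure V E B ?P = V"
    using assms(3) by (simp add: specified_leaky_forcing_def forces_all_def)
  moreover have "leaky_closure V E B L \<subseteq> V"
    using assms(1,2) by (rule leaky_closure_subset)
  ultimately show ?thesis
    using leaky_closure_blocked_leaks unfolding forces_all_def by (metis subset_antisym)
qed

lemma independent_leaks_image:
  assumes "inj_on \<phi> V" "P \<subseteq> V \<times> V" "independent_leaks P"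
  shows "independent_leaks (map_prod \<phi> \<phi> ` P)"
proof -
  have tails: "fst ` P \<subseteq> V" and heads: "snd ` P \<subseteq> V"
    using assms(2) by auto
  have "inj_on (map_prod \<phi> \<phi>) P"
    using map_prod_inj_on[OF assms(1) assms(1)] assms(2) by (rule inj_on_subset)
  moreover have "fst ` map_prod \<phi> \<phi> ` P = \<phi> ` fst ` P"
    and "snd ` map_prod \<phi> \<phi> ` P = \<phi> ` snd ` P"
    by force+
  moreover have "card (\<phi> ` fst ` P) = card (fst ` P)"
    using inj_on_subset[OF assms(1) tails] by (rule card_image)
  moreover have "\<phi> ` fst ` P \<inter> \<phi> ` snd ` P = \<phi> ` (fst ` P \<inter> snd ` P)"
    using inj_on_image_Int[OF assms(1) tails heads] by simp
  ultimately show ?thesis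
    using assms(3) by (simp add: independent_leaks_def tails_def heads_def card_image)
qed

lemma leaks_iso_independent_subsets_bound:
  assumes "L1 \<subseteq> V \<times> V" "leaks_iso V L1 L2"
    and bound: "\<forall>Q \<subseteq> L2. independent_leaks Q \<longrightarrow> card Q \<le> k"
  shows "\<forall>P \<subseteq> L1. independent_leaks P \<longrightarrow> card P \<le> k"
proof (intro allI impI)
  fix P assume P: "P \<subseteq> L1" "independent_leaks P"
  obtain \<phi> where bij: "bij_betw \<phi> V V"
    and iso: "\<forall>x\<in>V. \<forall>y\<in>V. (x, y) \<in> L1 \<longleftrightarrow> (\<phi> x, \<phi> y) \<in> L2"
    using assms(2) unfolding leaks_iso_def by blast
  have inj: "inj_on \<phi> V" and PV: "P \<subseteq> V \<times> V"
    using bij P(1) assms(1) by (auto simp: bij_betw_def)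
  have "map_prod \<phi> \<phi> ` P \<subseteq> L2"
    using iso P(1) PV by auto
  moreover have "independent_leaks (map_prod \<phi> \<phi> ` P)"
    using inj PV P(2) by (rule independent_leaks_image)
  ultimately have "card (map_prod \<phi> \<phi> ` P) \<le> k"
    using bound by blast
  moreover have "inj_on (map_prod \<phi> \<phi>) P"
    using map_prod_inj_on[OF inj inj] PV by (rule inj_on_subset)
  ultimately show "card P \<le> k"
    by (simp add: card_image)
qed

lemma leaks_iso_refl: "leaks_iso V L L"
  unfolding leaks_iso_def by (intro exI[of _ id]) simp

lemma leaks_iso_singleton:
  assumes "x \<noteq> y" "a \<noteq> b" "x \<in> V" "y \<in> V" "a \<in> V" "b \<in> V"
  shows "leaks_iso V {(x, y)} {(a, b)}"
proof -
  define \<phi> where "\<phi> = transpose (transpose x a y) b \<circ> transpose x a"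
  have "a \<noteq> transpose x a y"
    using assms(1) by (auto simp: transpose_def)
  then have \<phi>: "\<phi> x = a" "\<phi> y = b"
    using assms(2) by (simp_all add: \<phi>_def)
  have "transpose x a y \<in> V"
    using assms by (auto simp: transpose_def)
  then have bij: "bij_betw \<phi> V V"
    unfolding \<phi>_def using assms by (intro bij_betw_trans[where B = V]) auto
  then have "inj_on \<phi> V"
    by (rule bij_betw_imp_inj_on)
  with \<phi> assms(3,4) have "\<forall>u\<in>V. \<forall>v\<in>V. (u, v) \<in> {(x, y)} \<longleftrightarrow> (\<phi> u, \<phi> v) \<in> {(a, b)}"
    by (auto dest: inj_onD)
  with bij show ?thesis
    unfolding leaks_iso_def by blast
qed

lemma card_le_indep_number:
  assumes "finite L" "Q \<subseteq> L" "independent_leaks Q"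
  shows "card Q \<le> indep_number L"
  unfolding indep_number_def using assms by (intro Max_ge) auto

lemma indep_number_attained:
  assumes "finite L"
  obtains Q where "Q \<subseteq> L" "independent_leaks Q" "card Q = indep_number L"
proof -
  have "independent_leaks {}"
    by (simp add: independent_leaks_def tails_def heads_def)
  then have "card ` {Q. Q \<subseteq> L \<and> independent_leaks Q} \<noteq> {}"
    by blast
  then have "indep_number L \<in> card ` {Q. Q \<subseteq> L \<and> independent_leaks Q}"
    unfolding indep_number_def using assms by (intro Max_in) auto
  then show ?thesis
    using that by (auto simp: image_iff)
qed

lemma independent_leaks_singleton: "independent_leaks {(a, b)} \<longleftrightarrow> a \<noteq> b"
  by (auto simp add: independent_leaks_def tails_def heads_def)

lemma specified_1_leaky_forcing_if_L_leaky_forcing: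
  assumes "simple_graph V E" "B \<subseteq> V"
    and "(a, b) \<in> L" "a \<noteq> b" "a \<in> V" "b \<in> V"
    and L_leaky: "L_leaky_forcing V E L B"
  shows "specified_leaky_forcing V E 1 B"
  unfolding specified_leaky_forcing_def
proof (intro allI impI)
  fix L1 assume L1: "L1 \<subseteq> V \<times> V \<and> card L1 \<le> 1"
  have no_leaks: "forces_all V E B {}"
    using L_leaky leaks_iso_refl unfolding L_leaky_forcing_def by blast
  have "finite L1"
    using L1 assms(1) finite_leaks by blast
  with L1 have "L1 = {} \<or> (\<exists>p. L1 = {p})"
    by (meson card_0_eq card_1_singletonE less_one order_less_le)
  with L1 consider "L1 = {}" | x y where "L1 = {(x, y)}" "x \<in> V" "y \<in> V"
    by auto
  then show "forces_all V E B L1"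
  proof cases
    case 1
    then show ?thesis using no_leaks by simp
  next
    case (2 x y)
    show ?thesis
    proof (cases "x = y")
      case True
      then have "leaky_closure V E B {} \<subseteq> leaky_closure V E B L1"
        using 2 assms(1) by (intro leaky_closure_non_edge_leaks) (simp add: simple_graph_def)
      then show ?thesis
        using no_leaks leaky_closure_subset[OF assms(1,2)] unfolding forces_all_def by blast
    next
      case False
      then have "leaks_iso V L1 {(a, b)}"
        using 2 assms(4-6) by (simp add: leaks_iso_singleton)
      then show ?thesis
        using L_leaky L1 assms(3) unfolding L_leaky_forcing_def by blast
    qed
  qed
qed

lemma L_leaky_forcing_if_specified_1_leaky_forcing:
  assumes "simple_graph V E" "B \<subseteq> V" "specified_leaky_forcing V E 1 B"
    and "\<forall>Q \<subseteq> L. independent_leaks Q \<longrightarrow> card Q \<le> 1"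
  shows "L_leaky_forcing V E L B"
  unfolding L_leaky_forcing_def
proof (intro allI impI)
  fix L1 assume "L1 \<subseteq> V \<times> V \<and> (\<exists>L2 \<subseteq> L. leaks_iso V L1 L2)"
  then obtain L2 where L1: "L1 \<subseteq> V \<times> V" and "L2 \<subseteq> L" and iso: "leaks_iso V L1 L2"
    by blast
  then have "\<forall>Q \<subseteq> L2. independent_leaks Q \<longrightarrow> card Q \<le> 1"
    using assms(4) by blast
  with L1 iso have "\<forall>P \<subseteq> L1. independent_leaks P \<longrightarrow> card P \<le> 1"
    by (rule leaks_iso_independent_subsets_bound)
  with assms(1-3) L1 show "forces_all V E B L1"
    by (rule forces_all_if_independent_subsets_le_1)
qed

theorem proposition5p2:
  fixes V :: "'a set" and E :: "'a \<Rightarrow> 'a \<Rightarrow> bool"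
    and L :: "('a \<times> 'a) set" and B :: "'a set"
  assumes "simple_graph V E"
    and "L \<subseteq> V \<times> V"
    and "indep_number L = 1"
    and "B \<subseteq> V"
  shows "L_leaky_forcing V E L B \<longleftrightarrow> specified_leaky_forcing V E 1 B"
proof -
  have "finite L"
    using assms(1,2) by (rule finite_leaks)
  then obtain Q where "Q \<subseteq> L" "independent_leaks Q" "card Q = 1"
    using indep_number_attained assms(3) by metis
  moreover obtain a b where "Q = {(a, b)}"
    using \<open>card Q = 1\<close> by (metis card_1_singletonE surj_pair)
  ultimately have ab: "(a, b) \<in> L" "a \<noteq> b"
    by (auto simp: independent_leaks_singleton)
  with assms(2) have "a \<in> V" "b \<in> V"
    by auto
  have "\<forall>Q \<subseteq> L. independent_leaks Q \<longrightarrow> card Q \<le> 1"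
    using card_le_indep_number \<open>finite L\<close> assms(3) by metis
  show ?thesis
  proof
    assume "L_leaky_forcing V E L B"
    with assms(1,4) ab \<open>a \<in> V\<close> \<open>b \<in> V\<close> show "specified_leaky_forcing V E 1 B"
      by (rule specified_1_leaky_forcing_if_L_leaky_forcing)
  next
    assume "specified_leaky_forcing V E 1 B"
    with assms(1,4) show "L_leaky_forcing V E L B"
      using \<open>\<forall>Q \<subseteq> L. independent_leaks Q \<longrightarrow> card Q \<le> 1\<close>
      by (rule L_leaky_forcing_if_specified_1_leaky_forcing)
  qed
qed

end
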